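(* Let $d$ and $s$ be integers with $0\le s\le d-1$. There are a positive integer $r=r(d,s)$ and constants $0<c_1\le c_2$ depending only on $d$ and $s$ such that the following holds. Let $\Lambda\subseteq\mathbb{R}^d$ be a $d$-dimensional lattice with $\lambda_d(\Lambda,B^d)\le 1$, and write $\lambda_i=\lambda_i(\Lambda,B^d)$. Then there exist $s$ vectors $b_1,\dots,b_s\in\Lambda$, a $(d-s)$-dimensional linear subspace $N$ of $\mathbb{R}^d$ with $\mathbb{R}^d=\mathrm{lin}(b_1,\dots,b_s)\oplus N$, and the projection $p$ of $\mathbb{R}^d$ onto $N$ along $\mathrm{lin}(b_1,\dots,b_s)$, such that $p(\Lambda\cap B^d)\subseteq\Lambda\cap N\cap B^d(r)$ and \[c_1\lambda_{i+s}\le\lambda_i(\Lambda\cap N,\,B^d(r)\cap N)\le c_2\lambda_{i+s}\quad\text{for every } i\in\{1,\dots,d-s\}.\]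
   Context: $B^d(r)$ is the closed Euclidean ball of radius $r$ centered at the origin, $B^d=B^d(1)$. A $d$-dimensional lattice is the set of all integer linear combinations of $d$ linearly independent vectors of $\mathbb{R}^d$; $\Lambda\cap N$ is regarded as a $(d-s)$-dimensional lattice in $N$ and $B^d(r)\cap N$ as a convex body in $N$. For a lattice $\Lambda$ and a compact convex body $K$ symmetric about the origin, the $i$th successive minimum is $\lambda_i(\Lambda,K)=\inf\{\lambda\in\mathbb{R}:\dim(\Lambda\cap(\lambda K))\ge i\}$. $\mathrm{lin}$ denotes linear hull. *)

theory Defs
  imports "HOL-Analysis.Analysis"
begin

definition lattice_of_rank :: "nat \<Rightarrow> 'a::euclidean_space set \<Rightarrow> bool" where
  "lattice_of_rank k L \<longleftrightarrow>
     (\<exists>B. finite B \<and> independent B \<and> card B = k \<and>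
          L = {\<Sum>b\<in>B. of_int (c b) *\<^sub>R b | c. True})"

definition full_lattice :: "'a::euclidean_space set \<Rightarrow> bool" where
  "full_lattice L \<longleftrightarrow> lattice_of_rank DIM('a) L"

definition lattice_in :: "'a::euclidean_space set \<Rightarrow> 'a set \<Rightarrow> bool" where
  "lattice_in N L \<longleftrightarrow> L \<subseteq> N \<and> lattice_of_rank (dim N) L"

definition succ_min :: "nat \<Rightarrow> 'a::euclidean_space set \<Rightarrow> 'a set \<Rightarrow> real" where
  "succ_min i L K = Inf {t. t > 0 \<and> dim (L \<inter> ((\<lambda>x. t *\<^sub>R x) ` K)) \<ge> i}"

definition proj_along :: "'a::real_vector set \<Rightarrow> 'a set \<Rightarrow> 'a \<Rightarrow> 'a" where
  "proj_along N S x = (THE y. y \<in> N \<and> x - y \<in> span S)"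

end

theory Submission
  imports Defs
begin

text \<open>Choose lattice vectors v_0, ..., v_{d-1} greedily, each a shortest lattice vector outside
  the span of its predecessors, so that lambda_{k+1} = |v_k|. Dirichlet's simultaneous
  approximation shows that a lattice vector outside span {v_0, ..., v_{j-1}} keeps distance at
  least a constant times |v_j| from that span. The classical construction of a lattice basis
  adapted to the v_k gives a_j = sum_{k <= j} c_{jk} v_k with |a_j| <= d |v_j|, and the distance
  bound controls coefficients: |m_j| |v_j| <= C |sum_i m_i a_i|. Taking b_j = a_j for j < s and
  N = span {a_s, ..., a_{d-1}}, the projection just drops the first s coordinates, so it maps
  lattice points of the unit ball to lattice points of norm at most d^2 C, and the successive
  minima of the lattice in N lie between |v_{i+s-1}| / r and d |v_{i+s-1}| / r.\<close>

lemma span_image_eq_sums: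
  fixes f :: "nat \<Rightarrow> 'a::real_vector"
  assumes "finite I"
  shows "span (f ` I) = {\<Sum>i\<in>I. c i *\<^sub>R f i | c. True}"
  using assms
proof (induction I rule: finite_induct)
  case empty
  then show ?case by simp
next
  case (insert i I)
  show ?case
  proof (intro set_eqI iffI)
    fix x assume "x \<in> span (f ` insert i I)"
    then obtain k where "x - k *\<^sub>R f i \<in> span (f ` I)"
      by (auto simp: span_insert)
    then obtain c where c: "x - k *\<^sub>R f i = (\<Sum>j\<in>I. c j *\<^sub>R f j)"
      using insert.IH by auto
    have "(\<Sum>j\<in>I. (c(i := k)) j *\<^sub>R f j) = (\<Sum>j\<in>I. c j *\<^sub>R f j)"
      using insert.hyps by (intro sum.cong) auto
    then have "(\<Sum>j\<in>insert i I. (c(i := k)) j *\<^sub>R f j) = k *\<^sub>R f i + (\<Sum>j\<in>I. c j *\<^sub>R f j)"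
      using insert.hyps by simp
    also have "\<dots> = x" unfolding c[symmetric] by simp
    finally have "x = (\<Sum>j\<in>insert i I. (c(i := k)) j *\<^sub>R f j)" by simp
    then show "x \<in> {\<Sum>i\<in>insert i I. c i *\<^sub>R f i | c. True}" by blast
  next
    fix x assume "x \<in> {\<Sum>i\<in>insert i I. c i *\<^sub>R f i | c. True}"
    then obtain c where c: "x = (\<Sum>j\<in>insert i I. c j *\<^sub>R f j)" by blast
    have "x - c i *\<^sub>R f i = (\<Sum>j\<in>I. c j *\<^sub>R f j)"
      using insert.hyps c by (simp add: sum.insert)
    then have "x - c i *\<^sub>R f i \<in> span (f ` I)"
      using insert.IH by blast
    then show "x \<in> span (f ` insert i I)"
      unfolding image_insert span_insert by blast
  qed
qed

lemma in_span_image_lessThan_iff: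
  fixes f :: "nat \<Rightarrow> 'a::real_vector"
  shows "x \<in> span (f ` {..<n}) \<longleftrightarrow> (\<exists>c. x = (\<Sum>i<n. c i *\<^sub>R f i))"
  using span_image_eq_sums[of "{..<n}" f] by auto

lemma atLeastLessThan_subset_lessThan: "{m..<n} \<subseteq> {..<n}"
  by auto

lemma sum_lessThan_split:
  fixes s n :: nat
  assumes "s \<le> n"
  shows "(\<Sum>i<n. f i) = (\<Sum>i<s. f i) + (\<Sum>i\<in>{s..<n}. f i)"
proof -
  have "{..<n} = {..<s} \<union> {s..<n}" using assms by auto
  moreover have "{..<s} \<inter> {s..<n} = {}" by auto
  ultimately show ?thesis by (simp add: sum.union_disjoint)
qed

definition indep_seq :: "(nat \<Rightarrow> 'a::real_vector) \<Rightarrow> nat \<Rightarrow> bool" where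
  "indep_seq f n \<longleftrightarrow> (\<forall>c. (\<Sum>k<n. c k *\<^sub>R f k) = 0 \<longrightarrow> (\<forall>k<n. c k = 0))"

lemma sum_lessThan_if_scaleR:
  fixes f :: "nat \<Rightarrow> 'a::real_vector"
  assumes "I \<subseteq> {..<n}"
  shows "(\<Sum>k<n. (if k \<in> I then c k else 0) *\<^sub>R f k) = (\<Sum>k\<in>I. c k *\<^sub>R f k)"
proof -
  have "(\<Sum>k<n. (if k \<in> I then c k else 0) *\<^sub>R f k) = (\<Sum>k<n. if k \<in> I then c k *\<^sub>R f k else 0)"
    by (intro sum.cong) auto
  also have "\<dots> = (\<Sum>k\<in>I. c k *\<^sub>R f k)"
    using assms by (simp add: sum.inter_restrict[symmetric] Int_absorb1)
  finally show ?thesis .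
qed

lemma indep_seq_coeff_eq_0:
  assumes "indep_seq f n" "I \<subseteq> {..<n}" "(\<Sum>k\<in>I. c k *\<^sub>R f k) = 0" "k \<in> I"
  shows "c k = 0"
proof -
  have "(\<Sum>k<n. (if k \<in> I then c k else 0) *\<^sub>R f k) = 0"
    using assms(2,3) by (simp add: sum_lessThan_if_scaleR)
  moreover have "k < n" using assms(2,4) by auto
  ultimately have "(if k \<in> I then c k else 0) = 0"
    using assms(1) unfolding indep_seq_def by (elim allE[of _ "\<lambda>k. if k \<in> I then c k else 0"]) simp
  then show ?thesis using assms(4) by simp
qed

lemma indep_seq_coeff_eq_0_if_sums_eq:
  assumes "indep_seq f n" "I \<subseteq> {..<n}" "J \<subseteq> {..<n}"
    and "(\<Sum>i\<in>I. c i *\<^sub>R f i) = (\<Sum>i\<in>J. c' i *\<^sub>R f i)" "k \<in> I" "k \<notin> J"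
  shows "c k = 0"
proof -
  define d where "d = (\<lambda>i. (if i \<in> I then c i else 0) - (if i \<in> J then c' i else 0))"
  have "(\<Sum>i<n. d i *\<^sub>R f i) = 0"
    using assms(2-4) unfolding d_def
    by (simp add: scaleR_diff_left sum_subtractf sum_lessThan_if_scaleR)
  moreover have "k < n" using assms(2,5) by auto
  ultimately have "d k = 0"
    using assms(1) unfolding indep_seq_def by (elim allE[of _ d]) simp
  then show ?thesis using assms(5,6) unfolding d_def by simp
qed

lemma proj_along_eqI:
  assumes "subspace N" "span S \<inter> N = {0}" "y \<in> N" "x - y \<in> span S"
  shows "proj_along N S x = y"
  unfolding proj_along_def
proof (rule the_equality)
  show "y \<in> N \<and> x - y \<in> span S" using assms(3,4) ..
  fix y' assume y': "y' \<in> N \<and> x - y' \<in> span S"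
  have "y - y' = (x - y') - (x - y)" by simp
  then have "y - y' \<in> span S" using y' assms(4) span_diff by metis
  moreover have "y - y' \<in> N" using y' assms(1,3) by (simp add: subspace_diff)
  ultimately have "y - y' \<in> span S \<inter> N" ..
  then show "y' = y" using assms(2) by simp
qed

lemma indep_seq_inj_on:
  assumes "indep_seq f n"
  shows "inj_on f {..<n}"
proof (rule inj_onI)
  fix i j assume ij: "i \<in> {..<n}" "j \<in> {..<n}" "f i = f j"
  show "i = j"
  proof (rule ccontr)
    assume "i \<noteq> j"
    then have "(\<Sum>k\<in>{i,j}. (if k = i then 1 else -1) *\<^sub>R f k) = 0"
      using ij by simp
    from indep_seq_coeff_eq_0[OF assms _ this, of i] ij show False by auto
  qed
qed

lemma indep_seq_independent_image:
  fixes f :: "nat \<Rightarrow> 'a::euclidean_space"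
  assumes "indep_seq f n" "I \<subseteq> {..<n}"
  shows "independent (f ` I)" "card (f ` I) = card I"
proof -
  have inj: "inj_on f I" using indep_seq_inj_on[OF assms(1)] assms(2) inj_on_subset by blast
  show "card (f ` I) = card I" using inj by (simp add: card_image)
  show "independent (f ` I)"
    unfolding independent_explicit
  proof (intro conjI allI impI ballI)
    show "finite (f ` I)" using assms(2) finite_subset by blast
    fix c v assume c: "(\<Sum>v\<in>f ` I. c v *\<^sub>R v) = 0" and v: "v \<in> f ` I"
    then obtain k where k: "k \<in> I" "v = f k" by auto
    have "(\<Sum>k\<in>I. c (f k) *\<^sub>R f k) = 0" using c by (simp add: sum.reindex[OF inj])
    from indep_seq_coeff_eq_0[OF assms this k(1)] show "c v = 0" using k by simp
  qed
qed

lemma dim_span_image_indep_seq: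
  fixes f :: "nat \<Rightarrow> 'a::euclidean_space"
  assumes "indep_seq f n" "I \<subseteq> {..<n}"
  shows "dim (span (f ` I)) = card I"
  using indep_seq_independent_image[OF assms] dim_span_eq_card_independent by metis

lemma indep_seqI_notin_span:
  assumes "\<And>k. k < n \<Longrightarrow> f k \<notin> span (f ` {..<k})"
  shows "indep_seq f n"
  using assms
proof (induction n)
  case 0
  then show ?case by (simp add: indep_seq_def)
next
  case (Suc n)
  have IH: "indep_seq f n" using Suc by auto
  show ?case unfolding indep_seq_def
  proof (intro allI impI)
    fix c k assume c: "(\<Sum>k<Suc n. c k *\<^sub>R f k) = 0" and k: "k < Suc n"
    have cn: "c n = 0"
    proof (rule ccontr)
      assume "c n \<noteq> 0"
      have "c n *\<^sub>R f n = - (\<Sum>k<n. c k *\<^sub>R f k)"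
        using c by (simp add: eq_neg_iff_add_eq_0 add.commute)
      have "f n = (1 / c n) *\<^sub>R (c n *\<^sub>R f n)" using \<open>c n \<noteq> 0\<close> by simp
      also have "\<dots> = (1 / c n) *\<^sub>R - (\<Sum>k<n. c k *\<^sub>R f k)" unfolding \<open>c n *\<^sub>R f n = _\<close> ..
      also have "\<dots> = (\<Sum>k<n. (- c k / c n) *\<^sub>R f k)"
        by (simp add: scaleR_sum_right sum_negf)
      finally have "f n \<in> span (f ` {..<n})"
        unfolding in_span_image_lessThan_iff by (rule exI[of _ "\<lambda>k. - c k / c n"])
      then show False using Suc.prems by auto
    qed
    then have "(\<Sum>k<n. c k *\<^sub>R f k) = 0" using c by simp
    then show "c k = 0" using IH cn k less_Suc_eq unfolding indep_seq_def by auto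
  qed
qed

lemma dirichlet_simultaneous_approximation:
  fixes \<alpha> :: "nat \<Rightarrow> real" and M j :: nat
  assumes "M > 0"
  obtains D :: nat and n :: "nat \<Rightarrow> int"
  where "1 \<le> D" "D \<le> M ^ j" "\<And>k. k < j \<Longrightarrow> \<bar>real D * \<alpha> k - of_int (n k)\<bar> < 1 / real M"
proof -
  define F where "F = (\<lambda>t::nat. restrict (\<lambda>k. nat \<lfloor>real M * frac (real t * \<alpha> k)\<rfloor>) {..<j})"
  have F_range: "F ` {..M ^ j} \<subseteq> PiE {..<j} (\<lambda>_. {..<M})"
  proof -
    have "nat \<lfloor>real M * frac (real t * \<alpha> k)\<rfloor> < M" for t k
    proof -
      have "real M * frac (real t * \<alpha> k) < real M" using assms frac_lt_1 by simp
      then show ?thesis using frac_ge_0 assms by (simp add: nat_less_iff floor_less_iff)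
    qed
    then show ?thesis unfolding F_def by (intro image_subsetI) (simp add: restrict_PiE_iff)
  qed
  have "\<not> inj_on F {..M ^ j}"
  proof
    assume "inj_on F {..M ^ j}"
    then have "card {..M ^ j} \<le> card (PiE {..<j} (\<lambda>_. {..<M}))"
      using F_range by (intro card_inj_on_le) (auto simp: finite_PiE)
    then show False by (simp add: card_PiE)
  qed
  then obtain a b where ab: "a < b" "b \<le> M ^ j" "F a = F b"
    unfolding inj_on_def by (metis atMost_iff linorder_neqE_nat)
  show ?thesis
  proof
    show "1 \<le> b - a" "b - a \<le> M ^ j" using ab by auto
    fix k assume k: "k < j"
    have "nat \<lfloor>real M * frac (real a * \<alpha> k)\<rfloor> = nat \<lfloor>real M * frac (real b * \<alpha> k)\<rfloor>"
      using fun_cong[OF ab(3), of k] k unfolding F_def by simp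
    then have "\<lfloor>real M * frac (real a * \<alpha> k)\<rfloor> = \<lfloor>real M * frac (real b * \<alpha> k)\<rfloor>"
      using frac_ge_0 by (simp add: eq_nat_nat_iff)
    then have "\<bar>real M * frac (real b * \<alpha> k) - real M * frac (real a * \<alpha> k)\<bar> < 1"
      by linarith
    then have "real M * \<bar>frac (real b * \<alpha> k) - frac (real a * \<alpha> k)\<bar> < 1"
      by (simp add: abs_mult flip: right_diff_distrib)
    then have "\<bar>frac (real b * \<alpha> k) - frac (real a * \<alpha> k)\<bar> < 1 / real M"
      using assms by (simp add: less_divide_eq mult.commute)
    moreover have "frac (real b * \<alpha> k) - frac (real a * \<alpha> k) =
        real (b - a) * \<alpha> k - of_int (\<lfloor>real b * \<alpha> k\<rfloor> - \<lfloor>real a * \<alpha> k\<rfloor>)"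
      using ab(1) unfolding frac_def by (simp add: of_nat_diff left_diff_distrib)
    ultimately show "\<bar>real (b - a) * \<alpha> k - of_int (\<lfloor>real b * \<alpha> k\<rfloor> - \<lfloor>real a * \<alpha> k\<rfloor>)\<bar> < 1 / real M"
      by simp
  qed
qed

lemma scaleR_image_cball_Int_subspace:
  fixes N :: "'a::real_normed_vector set"
  assumes "t > 0" "subspace N"
  shows "(\<lambda>x. t *\<^sub>R x) ` (cball 0 r \<inter> N) = cball 0 (t * r) \<inter> N"
proof (intro set_eqI iffI)
  fix y assume "y \<in> (\<lambda>x. t *\<^sub>R x) ` (cball 0 r \<inter> N)"
  then obtain x where x: "norm x \<le> r" "x \<in> N" "y = t *\<^sub>R x" by auto
  then show "y \<in> cball 0 (t * r) \<inter> N"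
    using assms by (simp add: subspace_scale mult_left_mono)
next
  fix y assume y: "y \<in> cball 0 (t * r) \<inter> N"
  then have "(1 / t) *\<^sub>R y \<in> cball 0 r \<inter> N"
    using assms by (simp add: subspace_scale divide_le_eq mult.commute)
  moreover have "y = t *\<^sub>R ((1 / t) *\<^sub>R y)" using assms by simp
  ultimately show "y \<in> (\<lambda>x. t *\<^sub>R x) ` (cball 0 r \<inter> N)" by blast
qed

lemma succ_min_cball_Int_subspace:
  fixes L N :: "'a::euclidean_space set"
  assumes "subspace N"
  shows "succ_min i L (cball 0 r \<inter> N) = Inf {t. t > 0 \<and> i \<le> dim (L \<inter> cball 0 (t * r) \<inter> N)}"
  unfolding succ_min_def
  by (intro arg_cong[where f = Inf] Collect_cong conj_cong refl)
     (simp add: scaleR_image_cball_Int_subspace[OF _ assms] Int_assoc)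

lemma succ_min_cball_le:
  fixes L N :: "'a::euclidean_space set"
  assumes "subspace N" "t > 0" "i \<le> dim (L \<inter> cball 0 (t * r) \<inter> N)"
  shows "succ_min i L (cball 0 r \<inter> N) \<le> t"
  unfolding succ_min_cball_Int_subspace[OF assms(1)]
  using assms(2,3) by (intro cInf_lower bdd_belowI[of _ 0]) auto

lemma le_succ_min_cball:
  fixes L N :: "'a::euclidean_space set"
  assumes "subspace N" "t > 0" "i \<le> dim (L \<inter> cball 0 (t * r) \<inter> N)"
    and "\<And>t'. t' > 0 \<Longrightarrow> i \<le> dim (L \<inter> cball 0 (t' * r) \<inter> N) \<Longrightarrow> m \<le> t'"
  shows "m \<le> succ_min i L (cball 0 r \<inter> N)"
  unfolding succ_min_cball_Int_subspace[OF assms(1)]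
  using assms(2-4) by (intro cInf_greatest) auto

lemma int_combinationI:
  "x = (\<Sum>b\<in>E. of_int (c b) *\<^sub>R b) \<Longrightarrow> x \<in> {\<Sum>b\<in>E. of_int (c b) *\<^sub>R b | c. True}"
  by blast

locale euclidean_lattice =
  fixes L :: "'a::euclidean_space set"
  assumes full: "full_lattice L"
begin

lemma obtain_basis:
  obtains E where "finite E" "independent E" "card E = DIM('a)"
    "L = {\<Sum>b\<in>E. of_int (c b) *\<^sub>R b | c. True}"
  using full unfolding full_lattice_def lattice_of_rank_def by blast

lemma lattice_add: "x \<in> L \<Longrightarrow> y \<in> L \<Longrightarrow> x + y \<in> L"
proof -
  assume x: "x \<in> L" and y: "y \<in> L"
  obtain E where E: "L = {\<Sum>b\<in>E. of_int (c b) *\<^sub>R b | c. True}" using obtain_basis by blast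
  obtain c c' where "x = (\<Sum>b\<in>E. of_int (c b) *\<^sub>R b)" "y = (\<Sum>b\<in>E. of_int (c' b) *\<^sub>R b)"
    using x y E by blast
  then have "x + y = (\<Sum>b\<in>E. of_int ((\<lambda>b. c b + c' b) b) *\<^sub>R b)"
    by (simp add: sum.distrib scaleR_add_left)
  then show ?thesis unfolding E by (rule int_combinationI)
qed

lemma lattice_scaleR_of_int: "x \<in> L \<Longrightarrow> of_int k *\<^sub>R x \<in> L"
proof -
  assume x: "x \<in> L"
  obtain E where E: "L = {\<Sum>b\<in>E. of_int (c b) *\<^sub>R b | c. True}" using obtain_basis by blast
  obtain c where "x = (\<Sum>b\<in>E. of_int (c b) *\<^sub>R b)" using x E by blast
  then have "of_int k *\<^sub>R x = (\<Sum>b\<in>E. of_int ((\<lambda>b. k * c b) b) *\<^sub>R b)"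
    by (simp add: scaleR_sum_right)
  then show ?thesis unfolding E by (rule int_combinationI)
qed

lemma lattice_zero: "0 \<in> L"
proof -
  obtain E where E: "L = {\<Sum>b\<in>E. of_int (c b) *\<^sub>R b | c. True}" using obtain_basis by blast
  have "0 = (\<Sum>b\<in>E. of_int ((\<lambda>b. 0::int) b) *\<^sub>R b)" by simp
  then show ?thesis unfolding E by (rule int_combinationI)
qed

lemma lattice_diff: "x \<in> L \<Longrightarrow> y \<in> L \<Longrightarrow> x - y \<in> L"
  using lattice_add[of x "- y"] lattice_scaleR_of_int[of y "-1"] by simp

lemma lattice_sum_of_int:
  "finite I \<Longrightarrow> (\<And>i. i \<in> I \<Longrightarrow> x i \<in> L) \<Longrightarrow> (\<Sum>i\<in>I. of_int (m i) *\<^sub>R x i) \<in> L"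
  by (induction I rule: finite_induct) (simp_all add: lattice_zero lattice_add lattice_scaleR_of_int)

lemma basis_subset:
  assumes "finite E" "L = {\<Sum>b\<in>E. of_int (c b) *\<^sub>R b | c. True}"
  shows "E \<subseteq> L"
proof
  fix b assume b: "b \<in> E"
  have "(\<Sum>b'\<in>E. of_int ((\<lambda>b'. if b' = b then 1 else 0) b') *\<^sub>R b') = (\<Sum>b'\<in>E. if b' = b then b' else 0)"
    by (intro sum.cong) auto
  also have "\<dots> = b" using assms(1) b by (simp add: sum.delta)
  finally have "b = (\<Sum>b'\<in>E. of_int ((\<lambda>b'. if b' = b then 1 else 0) b') *\<^sub>R b')" by simp
  then show "b \<in> L" unfolding assms(2) by (rule int_combinationI)
qed

lemma exists_notin_span:
  assumes "finite S" "card S < DIM('a)"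
  shows "\<exists>w\<in>L. w \<notin> span S"
proof (rule ccontr)
  assume "\<not> ?thesis"
  then have LS: "L \<subseteq> span S" by blast
  obtain E where E: "finite E" "independent E" "card E = DIM('a)"
    "L = {\<Sum>b\<in>E. of_int (c b) *\<^sub>R b | c. True}" using obtain_basis by blast
  have "card E \<le> dim (span S)"
    using basis_subset[OF E(1,4)] LS E(2) by (intro independent_card_le_dim) auto
  also have "\<dots> \<le> card S" using assms(1) by (intro dim_le_card) auto
  finally show False using E(3) assms(2) by simp
qed

text \<open>Coordinates with respect to a lattice basis are bounded linear functionals, so only
  finitely many integer coordinate vectors give points of norm \<open>\<le> R\<close>.\<close>

lemma finite_Int_cball: "finite (L \<inter> cball 0 R)"
proof -
  obtain E where E: "finite E" "independent E" "card E = DIM('a)"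
    "L = {\<Sum>b\<in>E. of_int (c b) *\<^sub>R b | c. True}" using obtain_basis by blast
  have spE: "span E = UNIV"
    using card_ge_dim_independent[of E UNIV] E by auto
  have "\<forall>b\<in>E. \<exists>K. \<forall>x. norm (representation E x b) \<le> norm x * K"
    using bounded_linear.bounded[OF bounded_linear_representation[OF E(2) spE]] by blast
  then obtain Kf where Kf: "\<And>b x. b \<in> E \<Longrightarrow> norm (representation E x b) \<le> norm x * Kf b"
    by metis
  define K where "K = (\<Sum>b\<in>E. \<bar>Kf b\<bar>)"
  have K_bound: "\<bar>representation E x b\<bar> \<le> norm x * K" if "b \<in> E" for x b
  proof -
    have "\<bar>Kf b\<bar> \<le> K" unfolding K_def using member_le_sum[of b E "\<lambda>b. \<bar>Kf b\<bar>"] E(1) that by auto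
    then have "norm x * Kf b \<le> norm x * K" by (intro mult_left_mono) auto
    then show ?thesis using Kf[OF that, of x] by simp
  qed
  define M where "M = \<lceil>R * K\<rceil>"
  have "L \<inter> cball 0 R \<subseteq> (\<lambda>c. \<Sum>b\<in>E. of_int (c b) *\<^sub>R b) ` (PiE E (\<lambda>_. {-M..M}))"
  proof
    fix x assume x: "x \<in> L \<inter> cball 0 R"
    then obtain c where c: "x = (\<Sum>b\<in>E. of_int (c b) *\<^sub>R b)" using E(4) by blast
    have "representation E x b = of_int (c b)" if "b \<in> E" for b
    proof -
      have "x = (\<Sum>b\<in>E. representation E x b *\<^sub>R b)"
        using sum_representation_eq[of E x E] E spE by simp
      then have "(\<Sum>b\<in>E. (representation E x b - of_int (c b)) *\<^sub>R b) = 0"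
        using c by (simp add: scaleR_diff_left sum_subtractf)
      then show ?thesis using E(2) that unfolding independent_explicit by auto
    qed
    moreover have "norm x * K \<le> R * K"
      using x by (intro mult_right_mono) (auto simp: K_def intro: sum_nonneg)
    ultimately have coeff_bound: "\<bar>real_of_int (c b)\<bar> \<le> R * K" if "b \<in> E" for b
      using K_bound[OF that, of x] that by fastforce
    have "c b \<in> {-M..M}" if "b \<in> E" for b
      using coeff_bound[OF that]
      unfolding M_def by (auto simp: abs_le_iff le_ceiling_iff ceiling_le_iff) linarith+
    then have "restrict c E \<in> PiE E (\<lambda>_. {-M..M})" by auto
    moreover have "x = (\<Sum>b\<in>E. of_int (restrict c E b) *\<^sub>R b)" using c by simp
    ultimately show "x \<in> (\<lambda>c. \<Sum>b\<in>E. of_int (c b) *\<^sub>R b) ` (PiE E (\<lambda>_. {-M..M}))" by blast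
  qed
  moreover have "finite (PiE E (\<lambda>_. {-M..M}))" using E(1) by (simp add: finite_PiE)
  ultimately show ?thesis using finite_subset by blast
qed

lemma exists_shortest_notin_span:
  assumes "w0 \<in> L" "w0 \<notin> span S"
  shows "\<exists>w\<in>L. w \<notin> span S \<and> (\<forall>u\<in>L. u \<notin> span S \<longrightarrow> norm w \<le> norm u)"
proof -
  define X where "X = {u \<in> L \<inter> cball 0 (norm w0). u \<notin> span S}"
  have "finite X" unfolding X_def using finite_Int_cball by (rule finite_subset[rotated]) auto
  moreover have "w0 \<in> X" unfolding X_def using assms by auto
  ultimately obtain w where w: "w \<in> X" "\<And>u. u \<in> X \<Longrightarrow> norm w \<le> norm u"
    using arg_min_if_finite(1) arg_min_least by (metis empty_iff)
  show ?thesis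
  proof (intro bexI conjI ballI impI)
    show "w \<in> L" "w \<notin> span S" using w unfolding X_def by auto
    fix u assume "u \<in> L" "u \<notin> span S"
    then show "norm w \<le> norm u"
      using w(2)[of u] w(2)[OF \<open>w0 \<in> X\<close>] unfolding X_def by fastforce
  qed
qed

lemma exists_successive_minimal_vectors:
  "\<exists>v. \<forall>k<DIM('a). v k \<in> L \<and> v k \<notin> span (v ` {..<k}) \<and>
      (\<forall>w\<in>L. w \<notin> span (v ` {..<k}) \<longrightarrow> norm (v k) \<le> norm w)"
proof -
  have "\<exists>v. \<forall>k<j. v k \<in> L \<and> v k \<notin> span (v ` {..<k}) \<and>
      (\<forall>w\<in>L. w \<notin> span (v ` {..<k}) \<longrightarrow> norm (v k) \<le> norm w)" if "j \<le> DIM('a)" for j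
    using that
  proof (induction j)
    case 0
    then show ?case by simp
  next
    case (Suc j)
    then obtain v where v: "\<forall>k<j. v k \<in> L \<and> v k \<notin> span (v ` {..<k}) \<and>
      (\<forall>w\<in>L. w \<notin> span (v ` {..<k}) \<longrightarrow> norm (v k) \<le> norm w)" by auto
    have "card (v ` {..<j}) < DIM('a)"
      using card_image_le[of "{..<j}" v] Suc.prems by simp
    then obtain w0 where "w0 \<in> L" "w0 \<notin> span (v ` {..<j})"
      using exists_notin_span by blast
    then obtain w where w: "w \<in> L" "w \<notin> span (v ` {..<j})"
      "\<forall>u\<in>L. u \<notin> span (v ` {..<j}) \<longrightarrow> norm w \<le> norm u"
      using exists_shortest_notin_span by blast
    have image_upd: "(v(j := w)) ` {..<k} = v ` {..<k}" if "k \<le> j" for k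
      using that by (intro image_cong) auto
    show ?case
    proof (intro exI[of _ "v(j := w)"] allI impI)
      fix k assume "k < Suc j"
      then consider "k < j" | "k = j" by linarith
      then show "(v(j := w)) k \<in> L \<and> (v(j := w)) k \<notin> span ((v(j := w)) ` {..<k}) \<and>
        (\<forall>u\<in>L. u \<notin> span ((v(j := w)) ` {..<k}) \<longrightarrow> norm ((v(j := w)) k) \<le> norm u)"
      proof cases
        case 1
        then show ?thesis using v image_upd[of k] by auto
      next
        case 2
        then show ?thesis using w image_upd[of j] by auto
      qed
    qed
  qed
  then show ?thesis by blast
qed

end

definition dirichlet_const :: "nat \<Rightarrow> real" where
  "dirichlet_const d = 2 * real ((2 * d) ^ d)"

definition coeff_const :: "nat \<Rightarrow> real" where
  "coeff_const d = dirichlet_const d * (1 + real d * dirichlet_const d) ^ d"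

lemma dirichlet_const_pos: "d > 0 \<Longrightarrow> dirichlet_const d > 0"
  by (simp add: dirichlet_const_def)

lemma coeff_const_pos: "d > 0 \<Longrightarrow> coeff_const d > 0"
  using dirichlet_const_pos[of d] unfolding coeff_const_def
  by (intro mult_pos_pos zero_less_power add_pos_nonneg) auto

locale minimal_vectors = euclidean_lattice L for L :: "'a::euclidean_space set" +
  fixes v :: "nat \<Rightarrow> 'a"
  assumes v_in_lattice: "k < DIM('a) \<Longrightarrow> v k \<in> L"
    and v_notin_span: "k < DIM('a) \<Longrightarrow> v k \<notin> span (v ` {..<k})"
    and v_minimal: "k < DIM('a) \<Longrightarrow> w \<in> L \<Longrightarrow> w \<notin> span (v ` {..<k}) \<Longrightarrow> norm (v k) \<le> norm w"
begin

lemma indep_seq_v: "indep_seq v DIM('a)"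
  using v_notin_span by (rule indep_seqI_notin_span)

lemma norm_v_pos: "k < DIM('a) \<Longrightarrow> norm (v k) > 0"
  using v_notin_span[of k] span_zero by fastforce

lemma norm_v_mono:
  assumes "k \<le> j" "j < DIM('a)"
  shows "norm (v k) \<le> norm (v j)"
proof -
  have "span (v ` {..<k}) \<subseteq> span (v ` {..<j})" using assms by (intro span_mono image_mono) auto
  then show ?thesis using v_minimal[of k "v j"] v_notin_span v_in_lattice assms by auto
qed

lemma dim_span_v: "j \<le> DIM('a) \<Longrightarrow> dim (span (v ` {..<j})) = j"
  using dim_span_image_indep_seq[OF indep_seq_v, of "{..<j}"] by simp

lemma span_v_eq_UNIV: "span (v ` {..<DIM('a)}) = UNIV"
  using dim_span_v[of "DIM('a)"] by (intro subspace_dim_equal) auto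

lemma succ_min_eq_norm_v:
  assumes k: "k < DIM('a)"
  shows "succ_min (Suc k) L (cball 0 1) = norm (v k)"
proof -
  have "v ` {..<Suc k} \<subseteq> L \<inter> cball 0 (norm (v k) * 1) \<inter> UNIV"
    using v_in_lattice norm_v_mono k by auto
  moreover have "independent (v ` {..<Suc k})" "card (v ` {..<Suc k}) = Suc k"
    using indep_seq_independent_image[OF indep_seq_v, of "{..<Suc k}"] k by auto
  ultimately have dim_norm: "Suc k \<le> dim (L \<inter> cball 0 (norm (v k) * 1) \<inter> UNIV)"
    using independent_card_le_dim by metis
  have "succ_min (Suc k) L (cball 0 1 \<inter> UNIV) \<le> norm (v k)"
    by (rule succ_min_cball_le[OF subspace_UNIV norm_v_pos[OF k] dim_norm])
  moreover have "norm (v k) \<le> succ_min (Suc k) L (cball 0 1 \<inter> UNIV)"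
  proof (rule le_succ_min_cball[OF subspace_UNIV norm_v_pos[OF k] dim_norm])
    fix t assume t: "t > 0" "Suc k \<le> dim (L \<inter> cball 0 (t * 1) \<inter> UNIV)"
    have "\<not> L \<inter> cball 0 t \<subseteq> span (v ` {..<k})"
    proof
      assume "L \<inter> cball 0 t \<subseteq> span (v ` {..<k})"
      then have "dim (L \<inter> cball 0 t) \<le> dim (span (v ` {..<k}))" by (rule dim_subset)
      then show False using dim_span_v[of k] k t by simp
    qed
    then obtain w where w: "w \<in> L \<inter> cball 0 t" "w \<notin> span (v ` {..<k})" by blast
    then show "norm (v k) \<le> t" using v_minimal[OF k _ w(2)] by fastforce
  qed
  ultimately show ?thesis by simp
qed

text \<open>Otherwise a Dirichlet multiple of \<open>w\<close>, corrected by integer multiples of the \<open>v k\<close>,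
  would be a lattice vector outside the span shorter than \<open>v j\<close>.\<close>

lemma norm_v_le_dist_span:
  assumes j: "j < DIM('a)" and w: "w \<in> L" "w \<notin> span (v ` {..<j})"
    and y: "y \<in> span (v ` {..<j})"
  shows "norm (v j) \<le> dirichlet_const DIM('a) * norm (w - y)"
proof -
  define M where "M = 2 * DIM('a)"
  obtain \<alpha> where \<alpha>: "y = (\<Sum>k<j. \<alpha> k *\<^sub>R v k)"
    using y in_span_image_lessThan_iff by blast
  obtain D n where D: "1 \<le> D" "D \<le> M ^ j"
    and n: "\<And>k. k < j \<Longrightarrow> \<bar>real D * \<alpha> k - of_int (n k)\<bar> < 1 / real M"
    using dirichlet_simultaneous_approximation[where M = M and \<alpha> = \<alpha> and j = j] unfolding M_def by auto
  define u where "u = real D *\<^sub>R w - (\<Sum>k<j. of_int (n k) *\<^sub>R v k)"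
  have int_part_span: "(\<Sum>k<j. of_int (n k) *\<^sub>R v k) \<in> span (v ` {..<j})"
    by (intro span_sum span_scale span_base) auto
  have "u \<in> L"
    unfolding u_def using lattice_scaleR_of_int[OF w(1), of "int D"] v_in_lattice j
    by (intro lattice_diff lattice_sum_of_int) auto
  moreover have "u \<notin> span (v ` {..<j})"
  proof
    assume "u \<in> span (v ` {..<j})"
    then have "real D *\<^sub>R w \<in> span (v ` {..<j})"
      using span_add[OF _ int_part_span] unfolding u_def by fastforce
    then have "(1 / real D) *\<^sub>R (real D *\<^sub>R w) \<in> span (v ` {..<j})" by (rule span_scale)
    then show False using w(2) D by simp
  qed
  ultimately have v_le_u: "norm (v j) \<le> norm u" using v_minimal[OF j] by blast
  have "(\<Sum>k<j. (real D * \<alpha> k - of_int (n k)) *\<^sub>R v k) = real D *\<^sub>R y - (\<Sum>k<j. of_int (n k) *\<^sub>R v k)"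
    unfolding \<alpha> by (simp add: scaleR_diff_left sum_subtractf scaleR_sum_right)
  then have u_eq: "u = real D *\<^sub>R (w - y) + (\<Sum>k<j. (real D * \<alpha> k - of_int (n k)) *\<^sub>R v k)"
    unfolding u_def by (simp add: scaleR_diff_right)
  have "norm u \<le> norm (real D *\<^sub>R (w - y)) + norm (\<Sum>k<j. (real D * \<alpha> k - of_int (n k)) *\<^sub>R v k)"
    unfolding u_eq by (rule norm_triangle_ineq)
  also have "norm (real D *\<^sub>R (w - y)) \<le> real (M ^ DIM('a)) * norm (w - y)"
  proof -
    have "D \<le> M ^ DIM('a)" using D(2) power_increasing[of j "DIM('a)" M] j unfolding M_def by simp
    then show ?thesis by (simp add: mult_right_mono)
  qed
  also have "norm (\<Sum>k<j. (real D * \<alpha> k - of_int (n k)) *\<^sub>R v k) \<le> (\<Sum>k<j. 1 / real M * norm (v j))"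
  proof (rule order_trans[OF norm_sum sum_mono])
    fix k assume "k \<in> {..<j}"
    then have "\<bar>real D * \<alpha> k - of_int (n k)\<bar> * norm (v k) \<le> 1 / real M * norm (v j)"
      using n[of k] norm_v_mono[of k j] j by (intro mult_mono) auto
    then show "norm ((real D * \<alpha> k - of_int (n k)) *\<^sub>R v k) \<le> 1 / real M * norm (v j)"
      by simp
  qed
  also have "(\<Sum>k<j. 1 / real M * norm (v j)) = real j / real M * norm (v j)" by simp
  also have "\<dots> \<le> 1 / 2 * norm (v j)"
    using j by (intro mult_right_mono) (auto simp: M_def field_simps)
  finally have "norm (v j) \<le> real (M ^ DIM('a)) * norm (w - y) + 1 / 2 * norm (v j)"
    using v_le_u by simp
  then show ?thesis unfolding dirichlet_const_def M_def by simp
qed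

text \<open>The classical construction of a lattice basis adapted to the independent vectors \<open>v k\<close>.\<close>

definition admissible_coeffs :: "nat \<Rightarrow> (nat \<Rightarrow> real) set" where
  "admissible_coeffs j = {c. (\<forall>k>j. c k = 0) \<and> (\<forall>k<j. 0 \<le> c k \<and> c k < 1) \<and> 0 < c j \<and> c j \<le> 1 \<and>
      (\<Sum>k<Suc j. c k *\<^sub>R v k) \<in> L}"

definition basis_coeff :: "nat \<Rightarrow> nat \<Rightarrow> real" where
  "basis_coeff j = arg_min_on (\<lambda>c. c j) (admissible_coeffs j)"

definition basis_vec :: "nat \<Rightarrow> 'a" where
  "basis_vec j = (\<Sum>k<Suc j. basis_coeff j k *\<^sub>R v k)"

lemma finite_admissible_coeffs:
  assumes j: "j < DIM('a)"
  shows "finite (admissible_coeffs j)"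
proof -
  let ?f = "\<lambda>c. \<Sum>k<Suc j. c k *\<^sub>R v k"
  have "inj_on ?f (admissible_coeffs j)"
  proof (rule inj_onI)
    fix c c' assume c: "c \<in> admissible_coeffs j" "c' \<in> admissible_coeffs j" "?f c = ?f c'"
    have "(\<Sum>k<Suc j. (c k - c' k) *\<^sub>R v k) = 0"
      using c(3) by (simp add: scaleR_diff_left sum_subtractf)
    then have "c k = c' k" if "k \<le> j" for k
      using indep_seq_coeff_eq_0[OF indep_seq_v, of "{..<Suc j}" "\<lambda>k. c k - c' k" k] j that by auto
    moreover have "c k = c' k" if "k > j" for k
      using c(1,2) that unfolding admissible_coeffs_def by auto
    ultimately show "c = c'" by (meson ext not_le)
  qed
  moreover have "?f ` admissible_coeffs j \<subseteq> L \<inter> cball 0 (\<Sum>k<Suc j. norm (v k))"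
  proof
    fix x assume "x \<in> ?f ` admissible_coeffs j"
    then obtain c where c: "c \<in> admissible_coeffs j" "x = ?f c" by auto
    have "norm x \<le> (\<Sum>k<Suc j. norm (c k *\<^sub>R v k))" unfolding c(2) by (rule norm_sum)
    also have "\<dots> \<le> (\<Sum>k<Suc j. norm (v k))"
    proof (intro sum_mono)
      fix k assume "k \<in> {..<Suc j}"
      then have "\<bar>c k\<bar> \<le> 1" using c(1) unfolding admissible_coeffs_def by (cases "k = j") (auto simp: less_Suc_eq)
      then show "norm (c k *\<^sub>R v k) \<le> norm (v k)" by (simp add: mult_left_le_one_le)
    qed
    finally show "x \<in> L \<inter> cball 0 (\<Sum>k<Suc j. norm (v k))"
      using c unfolding admissible_coeffs_def by simp
  qed
  then have "finite (?f ` admissible_coeffs j)" using finite_Int_cball by (rule finite_subset)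
  ultimately show ?thesis by (rule finite_imageD[rotated])
qed

lemma indicator_admissible_coeffs:
  assumes j: "j < DIM('a)"
  shows "(\<lambda>k. if k = j then 1 else 0) \<in> admissible_coeffs j"
proof -
  have "(\<Sum>k<Suc j. (if k = j then 1 else 0) *\<^sub>R v k) = (\<Sum>k<Suc j. if k = j then v k else 0)"
    by (intro sum.cong) auto
  then show ?thesis unfolding admissible_coeffs_def using v_in_lattice[OF j] by auto
qed

lemma admissible_coeffs_nonempty: "j < DIM('a) \<Longrightarrow> admissible_coeffs j \<noteq> {}"
  using indicator_admissible_coeffs by blast

lemma basis_coeff_admissible: "j < DIM('a) \<Longrightarrow> basis_coeff j \<in> admissible_coeffs j"
  unfolding basis_coeff_def
  by (rule arg_min_if_finite(1)[OF finite_admissible_coeffs admissible_coeffs_nonempty])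

lemma basis_coeff_minimal: "j < DIM('a) \<Longrightarrow> c \<in> admissible_coeffs j \<Longrightarrow> basis_coeff j j \<le> c j"
  unfolding basis_coeff_def
  by (rule arg_min_least[OF finite_admissible_coeffs admissible_coeffs_nonempty])

lemma basis_coeff_bounds:
  assumes "j < DIM('a)"
  shows "0 < basis_coeff j j" "basis_coeff j j \<le> 1"
    "\<And>k. k < j \<Longrightarrow> 0 \<le> basis_coeff j k \<and> basis_coeff j k < 1"
  using basis_coeff_admissible[OF assms] unfolding admissible_coeffs_def mem_Collect_eq by blast+

lemma basis_vec_in_lattice: "j < DIM('a) \<Longrightarrow> basis_vec j \<in> L"
  using basis_coeff_admissible unfolding admissible_coeffs_def basis_vec_def mem_Collect_eq by blast

lemma basis_vec_in_span_v: "i < j \<Longrightarrow> basis_vec i \<in> span (v ` {..<j})"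
  unfolding basis_vec_def by (intro span_sum span_scale span_base) auto

lemma span_basis_vec_subset: "span (basis_vec ` {..<j}) \<subseteq> span (v ` {..<j})"
  using basis_vec_in_span_v by (intro span_minimal) auto

lemma basis_vec_notin_span_v:
  assumes j: "j < DIM('a)"
  shows "basis_vec j \<notin> span (v ` {..<j})"
proof
  assume "basis_vec j \<in> span (v ` {..<j})"
  then obtain \<beta> where \<beta>: "basis_vec j = (\<Sum>k<j. \<beta> k *\<^sub>R v k)"
    using in_span_image_lessThan_iff by blast
  define \<beta>' where "\<beta>' = (\<lambda>k. if k < j then \<beta> k else 0)"
  have "(\<Sum>k<Suc j. \<beta>' k *\<^sub>R v k) = (\<Sum>k<j. \<beta> k *\<^sub>R v k)"
    unfolding \<beta>'_def by (simp add: lessThan_Suc)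
  then have "(\<Sum>k<Suc j. (basis_coeff j k - \<beta>' k) *\<^sub>R v k) = 0"
    using \<beta> unfolding basis_vec_def by (simp add: scaleR_diff_left sum_subtractf)
  moreover have "{..<Suc j} \<subseteq> {..<DIM('a)}" using j by auto
  ultimately have "basis_coeff j j - \<beta>' j = 0"
    using indep_seq_coeff_eq_0[OF indep_seq_v, of "{..<Suc j}" "\<lambda>k. basis_coeff j k - \<beta>' k" j] by blast
  then show False using basis_coeff_bounds(1)[OF j] unfolding \<beta>'_def by simp
qed

lemma norm_basis_vec_le:
  assumes j: "j < DIM('a)"
  shows "norm (basis_vec j) \<le> real DIM('a) * norm (v j)"
proof -
  have "norm (basis_vec j) \<le> (\<Sum>k<Suc j. norm (basis_coeff j k *\<^sub>R v k))"
    unfolding basis_vec_def by (rule norm_sum)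
  also have "\<dots> \<le> (\<Sum>k<Suc j. norm (v j))"
  proof (intro sum_mono)
    fix k assume k: "k \<in> {..<Suc j}"
    then have "\<bar>basis_coeff j k\<bar> \<le> 1"
      using basis_coeff_bounds(1,2)[OF j] basis_coeff_bounds(3)[OF j, of k]
      by (cases "k = j") (auto simp: less_Suc_eq)
    moreover have "norm (v k) \<le> norm (v j)" using k j norm_v_mono by auto
    ultimately have "\<bar>basis_coeff j k\<bar> * norm (v k) \<le> 1 * norm (v j)" by (intro mult_mono) auto
    then show "norm (basis_coeff j k *\<^sub>R v k) \<le> norm (v j)" by simp
  qed
  also have "\<dots> \<le> real DIM('a) * norm (v j)" using j by (simp add: mult_right_mono)
  finally show ?thesis .
qed

lemma coeff_le_norm_partial_sum:
  assumes n: "n < DIM('a)"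
  shows "\<bar>m n\<bar> * norm (v n) \<le> dirichlet_const DIM('a) * norm (\<Sum>i<Suc n. m i *\<^sub>R basis_vec i)"
proof (cases "m n = 0")
  case True
  then show ?thesis using dirichlet_const_pos[of "DIM('a)"] by simp
next
  case False
  define y where "y = - (1 / m n) *\<^sub>R (\<Sum>i<n. m i *\<^sub>R basis_vec i)"
  have "y \<in> span (v ` {..<n})"
    unfolding y_def using basis_vec_in_span_v by (intro span_scale span_sum) auto
  then have "norm (v n) \<le> dirichlet_const DIM('a) * norm (basis_vec n - y)"
    using norm_v_le_dist_span[OF n basis_vec_in_lattice[OF n] basis_vec_notin_span_v[OF n]] by blast
  moreover have "(\<Sum>i<Suc n. m i *\<^sub>R basis_vec i) = m n *\<^sub>R (basis_vec n - y)"
    using False by (simp add: y_def scaleR_diff_right scaleR_add_right add.commute)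
  ultimately show ?thesis
    by (simp add: mult.left_commute mult_left_mono)
qed

lemma coeff_bound:
  assumes j: "j < DIM('a)"
  shows "\<bar>m j\<bar> * norm (v j) \<le> coeff_const DIM('a) * norm (\<Sum>i<DIM('a). m i *\<^sub>R basis_vec i)"
proof -
  define B where "B = dirichlet_const DIM('a)"
  define X where "X = (\<lambda>n. \<Sum>i<n. m i *\<^sub>R basis_vec i)"
  define R where "R = 1 + real DIM('a) * B"
  have B: "B > 0" unfolding B_def by (simp add: dirichlet_const_pos)
  then have R: "R \<ge> 1" unfolding R_def by simp
  have norm_step: "norm (X n) \<le> R * norm (X (Suc n))" if n: "n < DIM('a)" for n
  proof -
    have "norm (X n) \<le> norm (X (Suc n)) + \<bar>m n\<bar> * norm (basis_vec n)"
      using norm_triangle_ineq4[of "X (Suc n)" "m n *\<^sub>R basis_vec n"] unfolding X_def by simp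
    also have "\<bar>m n\<bar> * norm (basis_vec n) \<le> real DIM('a) * (\<bar>m n\<bar> * norm (v n))"
      using norm_basis_vec_le[OF n] by (simp add: mult.left_commute mult_left_mono)
    also have "\<dots> \<le> real DIM('a) * (B * norm (X (Suc n)))"
      using coeff_le_norm_partial_sum[OF n, of m] unfolding B_def X_def by (intro mult_left_mono) auto
    finally show ?thesis unfolding R_def by (simp add: algebra_simps)
  qed
  have "norm (X n) \<le> R ^ (DIM('a) - n) * norm (X DIM('a))" if "n \<le> DIM('a)" for n
    using that
  proof (induction n rule: inc_induct)
    case (step k)
    have "norm (X k) \<le> R * (R ^ (DIM('a) - Suc k) * norm (X DIM('a)))"
      using norm_step[OF step.hyps(2)] step.IH R by (meson order_trans mult_left_mono zero_le_one)
    moreover have "DIM('a) - k = Suc (DIM('a) - Suc k)" using step.hyps(2) by simp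
    ultimately show ?case by (simp add: mult.assoc)
  qed simp
  from this[of "Suc j"] j have "norm (X (Suc j)) \<le> R ^ (DIM('a) - Suc j) * norm (X DIM('a))"
    by simp
  also have "\<dots> \<le> R ^ DIM('a) * norm (X DIM('a))"
    using R by (intro mult_right_mono power_increasing) auto
  finally have "norm (X (Suc j)) \<le> R ^ DIM('a) * norm (X DIM('a))" .
  then have "B * norm (X (Suc j)) \<le> coeff_const DIM('a) * norm (X DIM('a))"
    using B unfolding coeff_const_def B_def R_def by (simp add: mult.assoc mult_left_mono)
  moreover have "\<bar>m j\<bar> * norm (v j) \<le> B * norm (X (Suc j))"
    using coeff_le_norm_partial_sum[OF j] unfolding B_def X_def .
  ultimately show ?thesis unfolding X_def by linarith
qed

lemma indep_seq_basis_vec: "indep_seq basis_vec DIM('a)"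
  unfolding indep_seq_def
proof (intro allI impI)
  fix m k assume m: "(\<Sum>k<DIM('a). m k *\<^sub>R basis_vec k) = 0" and k: "k < DIM('a)"
  have "\<bar>m k\<bar> * norm (v k) \<le> 0" using coeff_bound[OF k, of m] m by simp
  then show "m k = 0" using norm_v_pos[OF k] by (simp add: mult_le_0_iff)
qed

lemma span_basis_vec_eq:
  assumes "j \<le> DIM('a)"
  shows "span (basis_vec ` {..<j}) = span (v ` {..<j})"
  using span_basis_vec_subset dim_span_v[OF assms]
    dim_span_image_indep_seq[OF indep_seq_basis_vec, of "{..<j}"] assms
  by (intro subspace_dim_equal) auto

lemma span_basis_vec_eq_UNIV: "span (basis_vec ` {..<DIM('a)}) = UNIV"
  using span_basis_vec_eq span_v_eq_UNIV by simp

text \<open>If the remainder below had a nonzero \<open>j\<close>-th coefficient, reducing its lower coefficients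
  modulo 1 would give an admissible coefficient vector beating the minimal \<open>basis_coeff j j\<close>.\<close>

lemma reduce_by_basis_vec:
  assumes j: "j < DIM('a)" and w: "w \<in> L" "w \<in> span (v ` {..<Suc j})"
  obtains q :: int where "w - of_int q *\<^sub>R basis_vec j \<in> span (v ` {..<j})"
proof -
  obtain \<beta> where \<beta>: "w = (\<Sum>k<Suc j. \<beta> k *\<^sub>R v k)"
    using w(2) in_span_image_lessThan_iff by blast
  define g where "g = basis_coeff j j"
  have g: "0 < g" "g \<le> 1" using basis_coeff_bounds[OF j] unfolding g_def by auto
  define q where "q = \<lfloor>\<beta> j / g\<rfloor>"
  define \<gamma> where "\<gamma> = (\<lambda>k. \<beta> k - of_int q * basis_coeff j k)"
  define w' where "w' = w - of_int q *\<^sub>R basis_vec j"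
  have w'_in_lattice: "w' \<in> L"
    unfolding w'_def using w(1) basis_vec_in_lattice[OF j] by (intro lattice_diff lattice_scaleR_of_int)
  have w'_eq: "w' = (\<Sum>k<Suc j. \<gamma> k *\<^sub>R v k)"
    unfolding w'_def \<beta> basis_vec_def \<gamma>_def
    by (simp add: scaleR_diff_left sum_subtractf scaleR_sum_right scaleR_add_right)
  have "of_int q \<le> \<beta> j / g" "\<beta> j / g < of_int q + 1" unfolding q_def by linarith+
  then have "of_int q * g \<le> \<beta> j" "\<beta> j < (of_int q + 1) * g" using g by (simp_all add: field_simps)
  then have \<gamma>_j: "0 \<le> \<gamma> j" "\<gamma> j < g" unfolding \<gamma>_def g_def by (simp_all add: algebra_simps)
  have "\<gamma> j = 0"
  proof (rule ccontr)
    assume "\<gamma> j \<noteq> 0"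
    define c where "c = (\<lambda>k. if k < j then frac (\<gamma> k) else if k = j then \<gamma> j else 0)"
    have "(\<Sum>k<Suc j. c k *\<^sub>R v k) = (\<Sum>k<j. frac (\<gamma> k) *\<^sub>R v k) + \<gamma> j *\<^sub>R v j"
      unfolding c_def by simp
    also have "\<dots> = w' - (\<Sum>k<j. of_int \<lfloor>\<gamma> k\<rfloor> *\<^sub>R v k)"
      unfolding w'_eq frac_def by (simp add: scaleR_diff_left sum_subtractf)
    finally have "(\<Sum>k<Suc j. c k *\<^sub>R v k) = w' - (\<Sum>k<j. of_int \<lfloor>\<gamma> k\<rfloor> *\<^sub>R v k)" .
    moreover have "w' - (\<Sum>k<j. of_int \<lfloor>\<gamma> k\<rfloor> *\<^sub>R v k) \<in> L"
      using w'_in_lattice v_in_lattice j by (intro lattice_diff lattice_sum_of_int) auto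
    ultimately have "(\<Sum>k<Suc j. c k *\<^sub>R v k) \<in> L" by simp
    then have "c \<in> admissible_coeffs j"
      using \<open>\<gamma> j \<noteq> 0\<close> \<gamma>_j g unfolding admissible_coeffs_def c_def by (auto simp: frac_lt_1)
    then have "g \<le> \<gamma> j" using basis_coeff_minimal[OF j] unfolding g_def c_def by fastforce
    then show False using \<gamma>_j by simp
  qed
  then have "w' = (\<Sum>k<j. \<gamma> k *\<^sub>R v k)" using w'_eq by simp
  then show ?thesis using that[of q] unfolding w'_def in_span_image_lessThan_iff by blast
qed

lemma lattice_eq_int_combination_basis_vec:
  assumes "w \<in> L"
  obtains m :: "nat \<Rightarrow> int" where "w = (\<Sum>i<DIM('a). of_int (m i) *\<^sub>R basis_vec i)"
proof -
  have "\<exists>m::nat \<Rightarrow> int. w = (\<Sum>i<j. of_int (m i) *\<^sub>R basis_vec i)"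
    if "j \<le> DIM('a)" "w \<in> L" "w \<in> span (v ` {..<j})" for j w
    using that
  proof (induction j arbitrary: w)
    case 0
    then show ?case by simp
  next
    case (Suc j)
    then obtain q :: int where q: "w - of_int q *\<^sub>R basis_vec j \<in> span (v ` {..<j})"
      using reduce_by_basis_vec by (metis Suc_le_lessD)
    moreover have "w - of_int q *\<^sub>R basis_vec j \<in> L"
      using Suc.prems basis_vec_in_lattice by (simp add: lattice_diff lattice_scaleR_of_int)
    ultimately obtain m :: "nat \<Rightarrow> int"
      where "w - of_int q *\<^sub>R basis_vec j = (\<Sum>i<j. of_int (m i) *\<^sub>R basis_vec i)"
      using Suc.IH Suc.prems(1) by (meson Suc_leD)
    then have "w = (\<Sum>i<Suc j. of_int ((m(j := q)) i) *\<^sub>R basis_vec i)"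
      by (simp add: algebra_simps)
    then show ?case by blast
  qed
  then show ?thesis using that assms span_v_eq_UNIV by blast
qed

lemma int_coeff_term_le:
  assumes i: "i < DIM('a)"
  shows "\<bar>m i\<bar> * norm (basis_vec i) \<le> real DIM('a) * coeff_const DIM('a) * norm (\<Sum>i<DIM('a). m i *\<^sub>R basis_vec i)"
proof -
  have "\<bar>m i\<bar> * norm (basis_vec i) \<le> real DIM('a) * (\<bar>m i\<bar> * norm (v i))"
    using norm_basis_vec_le[OF i] by (simp add: mult.left_commute mult_left_mono)
  also have "\<dots> \<le> real DIM('a) * (coeff_const DIM('a) * norm (\<Sum>i<DIM('a). m i *\<^sub>R basis_vec i))"
    using coeff_bound[OF i] by (intro mult_left_mono) auto
  finally show ?thesis by (simp add: mult.assoc)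
qed

definition tail_space :: "nat \<Rightarrow> 'a set" where
  "tail_space s = span (basis_vec ` {s..<DIM('a)})"

lemma subspace_tail_space: "subspace (tail_space s)"
  unfolding tail_space_def by (rule subspace_span)

lemma dim_tail_space: "dim (tail_space s) = DIM('a) - s"
  unfolding tail_space_def
  by (subst dim_span_image_indep_seq[OF indep_seq_basis_vec]) auto

lemma in_tail_space_iff: "x \<in> tail_space s \<longleftrightarrow> (\<exists>c. x = (\<Sum>i\<in>{s..<DIM('a)}. c i *\<^sub>R basis_vec i))"
  unfolding tail_space_def using span_image_eq_sums[of "{s..<DIM('a)}" basis_vec] by auto

lemma coeff_eq_0_if_in_tail_space:
  assumes "I \<subseteq> {..<DIM('a)}" "(\<Sum>i\<in>I. c i *\<^sub>R basis_vec i) \<in> tail_space s" "k \<in> I" "k < s"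
  shows "c k = 0"
proof -
  obtain c' where eq: "(\<Sum>i\<in>I. c i *\<^sub>R basis_vec i) = (\<Sum>i\<in>{s..<DIM('a)}. c' i *\<^sub>R basis_vec i)"
    using assms(2) in_tail_space_iff by blast
  have "{s..<DIM('a)} \<subseteq> {..<DIM('a)}" "k \<notin> {s..<DIM('a)}" using assms(4) by auto
  from indep_seq_coeff_eq_0_if_sums_eq[OF indep_seq_basis_vec assms(1) this(1) eq assms(3) this(2)]
  show ?thesis .
qed

lemma span_head_Int_tail_space:
  assumes "s \<le> DIM('a)"
  shows "span (basis_vec ` {..<s}) \<inter> tail_space s = {0}"
proof (intro equalityI subsetI)
  fix x assume x: "x \<in> span (basis_vec ` {..<s}) \<inter> tail_space s"
  then obtain c where c: "x = (\<Sum>i\<in>{..<s}. c i *\<^sub>R basis_vec i)"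
    using in_span_image_lessThan_iff by blast
  have "{..<s} \<subseteq> {..<DIM('a)}" "(\<Sum>i\<in>{..<s}. c i *\<^sub>R basis_vec i) \<in> tail_space s"
    using assms x c by auto
  then have "c k = 0" if "k < s" for k
    using coeff_eq_0_if_in_tail_space that by blast
  then show "x \<in> {0}" using c by simp
qed (simp add: span_zero subspace_0[OF subspace_tail_space])

lemma basis_vec_expansion:
  obtains c where "x = (\<Sum>i<DIM('a). c i *\<^sub>R basis_vec i)"
proof -
  have "x \<in> span (basis_vec ` {..<DIM('a)})" using span_basis_vec_eq_UNIV by simp
  then show ?thesis using that unfolding in_span_image_lessThan_iff by blast
qed

lemma span_head_plus_tail_space:
  assumes "s \<le> DIM('a)"
  shows "{x + y | x y. x \<in> span (basis_vec ` {..<s}) \<and> y \<in> tail_space s} = UNIV"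
proof -
  have "z \<in> {x + y | x y. x \<in> span (basis_vec ` {..<s}) \<and> y \<in> tail_space s}" for z
  proof -
    obtain c where c: "z = (\<Sum>i<DIM('a). c i *\<^sub>R basis_vec i)" using basis_vec_expansion .
    have "(\<Sum>i<s. c i *\<^sub>R basis_vec i) \<in> span (basis_vec ` {..<s})"
      by (intro span_sum span_scale span_base) auto
    moreover have "(\<Sum>i\<in>{s..<DIM('a)}. c i *\<^sub>R basis_vec i) \<in> tail_space s"
      unfolding in_tail_space_iff by blast
    ultimately show ?thesis unfolding c sum_lessThan_split[OF assms] by blast
  qed
  then show ?thesis by blast
qed

lemma proj_along_tail_space:
  assumes "s \<le> DIM('a)"
  shows "proj_along (tail_space s) (basis_vec ` {..<s}) (\<Sum>i<DIM('a). c i *\<^sub>R basis_vec i) =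
    (\<Sum>i\<in>{s..<DIM('a)}. c i *\<^sub>R basis_vec i)"
  using sum_lessThan_split[OF assms, of "\<lambda>i. c i *\<^sub>R basis_vec i"] in_tail_space_iff
  by (intro proj_along_eqI[OF subspace_tail_space span_head_Int_tail_space[OF assms]])
     (auto simp: in_span_image_lessThan_iff)

lemma lattice_Int_tail_space:
  assumes "s \<le> DIM('a)"
  shows "L \<inter> tail_space s = {\<Sum>i\<in>{s..<DIM('a)}. of_int (m i) *\<^sub>R basis_vec i | m. True}"
proof (intro set_eqI iffI)
  fix x assume x: "x \<in> L \<inter> tail_space s"
  obtain m where m: "x = (\<Sum>i<DIM('a). of_int (m i) *\<^sub>R basis_vec i)"
    using x lattice_eq_int_combination_basis_vec by blast
  then have "real_of_int (m k) = 0" if "k < s" for k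
    using coeff_eq_0_if_in_tail_space[of "{..<DIM('a)}" "\<lambda>i. of_int (m i)"] x that assms by auto
  then have "x = (\<Sum>i\<in>{s..<DIM('a)}. of_int (m i) *\<^sub>R basis_vec i)"
    unfolding m sum_lessThan_split[OF assms] by simp
  then show "x \<in> {\<Sum>i\<in>{s..<DIM('a)}. of_int (m i) *\<^sub>R basis_vec i | m. True}" by blast
next
  fix x assume "x \<in> {\<Sum>i\<in>{s..<DIM('a)}. of_int (m i) *\<^sub>R basis_vec i | m. True}"
  then show "x \<in> L \<inter> tail_space s"
    using basis_vec_in_lattice in_tail_space_iff by (auto intro!: lattice_sum_of_int)
qed

lemma lattice_in_tail_space:
  assumes "s \<le> DIM('a)"
  shows "lattice_in (tail_space s) (L \<inter> tail_space s)"
  unfolding lattice_in_def lattice_of_rank_def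
proof (intro conjI exI[of _ "basis_vec ` {s..<DIM('a)}"])
  have inj: "inj_on basis_vec {s..<DIM('a)}"
    using indep_seq_inj_on[OF indep_seq_basis_vec] by (rule inj_on_subset) auto
  show "independent (basis_vec ` {s..<DIM('a)})" "card (basis_vec ` {s..<DIM('a)}) = dim (tail_space s)"
    using indep_seq_independent_image[OF indep_seq_basis_vec atLeastLessThan_subset_lessThan]
    by (simp_all add: dim_tail_space)
  show "L \<inter> tail_space s = {\<Sum>b\<in>basis_vec ` {s..<DIM('a)}. of_int (c b) *\<^sub>R b | c. True}"
    unfolding lattice_Int_tail_space[OF assms]
  proof (intro set_eqI iffI)
    fix x assume "x \<in> {\<Sum>i\<in>{s..<DIM('a)}. of_int (m i) *\<^sub>R basis_vec i | m. True}"
    then obtain m where "x = (\<Sum>i\<in>{s..<DIM('a)}. of_int (m i) *\<^sub>R basis_vec i)" by blast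
    also have "\<dots> = (\<Sum>b\<in>basis_vec ` {s..<DIM('a)}. of_int ((\<lambda>b. m (inv_into {s..<DIM('a)} basis_vec b)) b) *\<^sub>R b)"
      using inj by (simp add: sum.reindex inv_into_f_f)
    finally show "x \<in> {\<Sum>b\<in>basis_vec ` {s..<DIM('a)}. of_int (c b) *\<^sub>R b | c. True}"
      by (rule int_combinationI)
  next
    fix x assume "x \<in> {\<Sum>b\<in>basis_vec ` {s..<DIM('a)}. of_int (c b) *\<^sub>R b | c. True}"
    then obtain c where "x = (\<Sum>b\<in>basis_vec ` {s..<DIM('a)}. of_int (c b) *\<^sub>R b)" by blast
    then have "x = (\<Sum>i\<in>{s..<DIM('a)}. of_int (c (basis_vec i)) *\<^sub>R basis_vec i)"
      using inj by (simp add: sum.reindex)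
    then show "x \<in> {\<Sum>i\<in>{s..<DIM('a)}. of_int (m i) *\<^sub>R basis_vec i | m. True}"
      by (intro CollectI exI[of _ "\<lambda>i. c (basis_vec i)"]) simp
  qed
qed auto

lemma proj_lattice_cball_subset:
  assumes s: "s \<le> DIM('a)" and r: "real DIM('a) * real DIM('a) * coeff_const DIM('a) \<le> r"
  shows "proj_along (tail_space s) (basis_vec ` {..<s}) ` (L \<inter> cball 0 1) \<subseteq> L \<inter> tail_space s \<inter> cball 0 r"
proof
  fix z assume "z \<in> proj_along (tail_space s) (basis_vec ` {..<s}) ` (L \<inter> cball 0 1)"
  then obtain x where x: "x \<in> L" "norm x \<le> 1" "z = proj_along (tail_space s) (basis_vec ` {..<s}) x"
    by auto
  obtain m where m: "x = (\<Sum>i<DIM('a). of_int (m i) *\<^sub>R basis_vec i)"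
    using x(1) lattice_eq_int_combination_basis_vec by blast
  have z: "z = (\<Sum>i\<in>{s..<DIM('a)}. of_int (m i) *\<^sub>R basis_vec i)"
    using x(3) proj_along_tail_space[OF s] m by simp
  have "norm z \<le> (\<Sum>i\<in>{s..<DIM('a)}. \<bar>of_int (m i)\<bar> * norm (basis_vec i))"
    unfolding z by (rule order_trans[OF norm_sum]) simp
  also have "\<dots> \<le> (\<Sum>i\<in>{s..<DIM('a)}. real DIM('a) * coeff_const DIM('a))"
  proof (rule sum_mono)
    fix i assume i: "i \<in> {s..<DIM('a)}"
    have "\<bar>of_int (m i)\<bar> * norm (basis_vec i) \<le> real DIM('a) * coeff_const DIM('a) * norm x"
      using int_coeff_term_le[of i "\<lambda>i. of_int (m i)"] i m by simp
    also have "\<dots> \<le> real DIM('a) * coeff_const DIM('a)"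
      using x(2) coeff_const_pos[of "DIM('a)"] by (simp add: mult_left_le)
    finally show "\<bar>of_int (m i)\<bar> * norm (basis_vec i) \<le> real DIM('a) * coeff_const DIM('a)" .
  qed
  also have "\<dots> \<le> real DIM('a) * (real DIM('a) * coeff_const DIM('a))"
    using coeff_const_pos[of "DIM('a)"] by (simp add: mult_right_mono)
  finally have "norm z \<le> r" using r by (simp add: mult.assoc)
  then show "z \<in> L \<inter> tail_space s \<inter> cball 0 r"
    using z lattice_Int_tail_space[OF s] by auto
qed

lemma span_v_Int_tail_space_subset:
  assumes "s \<le> j" "j \<le> DIM('a)"
  shows "span (v ` {..<j}) \<inter> tail_space s \<subseteq> span (basis_vec ` {s..<j})"
proof
  fix x assume x: "x \<in> span (v ` {..<j}) \<inter> tail_space s"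
  then obtain c where c: "x = (\<Sum>i<j. c i *\<^sub>R basis_vec i)"
    using span_basis_vec_eq[OF assms(2)] in_span_image_lessThan_iff by (metis IntD1)
  have "c k = 0" if "k < s" for k
    using coeff_eq_0_if_in_tail_space[of "{..<j}" c s k] x c assms that by auto
  then have "x = (\<Sum>i\<in>{s..<j}. c i *\<^sub>R basis_vec i)"
    unfolding c sum_lessThan_split[OF assms(1)] by simp
  moreover have "(\<Sum>i\<in>{s..<j}. c i *\<^sub>R basis_vec i) \<in> span (basis_vec ` {s..<j})"
    by (intro span_sum span_scale span_base) auto
  ultimately show "x \<in> span (basis_vec ` {s..<j})" by simp
qed

lemma norm_v_le_radius:
  assumes j: "s \<le> j" "j < DIM('a)" and dim: "Suc j - s \<le> dim (L \<inter> cball 0 \<rho> \<inter> tail_space s)"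
  shows "norm (v j) \<le> \<rho>"
proof -
  have "\<not> L \<inter> cball 0 \<rho> \<inter> tail_space s \<subseteq> span (v ` {..<j})"
  proof
    assume "L \<inter> cball 0 \<rho> \<inter> tail_space s \<subseteq> span (v ` {..<j})"
    then have "L \<inter> cball 0 \<rho> \<inter> tail_space s \<subseteq> span (basis_vec ` {s..<j})"
      using span_v_Int_tail_space_subset[of s j] j by auto
    then have "dim (L \<inter> cball 0 \<rho> \<inter> tail_space s) \<le> dim (span (basis_vec ` {s..<j}))"
      by (rule dim_subset)
    also have "\<dots> = j - s"
      using j by (subst dim_span_image_indep_seq[OF indep_seq_basis_vec]) auto
    finally show False using dim j by linarith
  qed
  then obtain w where w: "w \<in> L \<inter> cball 0 \<rho> \<inter> tail_space s" "w \<notin> span (v ` {..<j})"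
    by blast
  then show ?thesis using v_minimal[OF j(2) _ w(2)] by fastforce
qed

lemma dim_tail_space_cball_ge:
  assumes j: "s \<le> j" "j < DIM('a)"
  shows "Suc j - s \<le> dim (L \<inter> cball 0 (real DIM('a) * norm (v j)) \<inter> tail_space s)"
proof -
  have "basis_vec ` {s..<Suc j} \<subseteq> L \<inter> cball 0 (real DIM('a) * norm (v j)) \<inter> tail_space s"
  proof
    fix x assume "x \<in> basis_vec ` {s..<Suc j}"
    then obtain k where k: "s \<le> k" "k \<le> j" "x = basis_vec k" by auto
    have "norm x \<le> real DIM('a) * norm (v k)" using norm_basis_vec_le[of k] k j by simp
    also have "\<dots> \<le> real DIM('a) * norm (v j)"
      using norm_v_mono[of k j] k j by (intro mult_left_mono) auto
    finally have "norm x \<le> real DIM('a) * norm (v j)" .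
    moreover have "x \<in> tail_space s" unfolding tail_space_def k(3) using k j by (intro span_base) auto
    ultimately show "x \<in> L \<inter> cball 0 (real DIM('a) * norm (v j)) \<inter> tail_space s"
      using basis_vec_in_lattice k j by auto
  qed
  moreover have "{s..<Suc j} \<subseteq> {..<DIM('a)}" using j by auto
  then have "independent (basis_vec ` {s..<Suc j})" "card (basis_vec ` {s..<Suc j}) = Suc j - s"
    using indep_seq_independent_image[OF indep_seq_basis_vec] by auto
  ultimately show ?thesis using independent_card_le_dim by metis
qed

lemma succ_min_tail_space_bounds:
  assumes j: "s \<le> j" "j < DIM('a)" and r: "r > 0"
  shows "norm (v j) / r \<le> succ_min (Suc j - s) (L \<inter> tail_space s) (cball 0 r \<inter> tail_space s)"
    and "succ_min (Suc j - s) (L \<inter> tail_space s) (cball 0 r \<inter> tail_space s) \<le> real DIM('a) * norm (v j) / r"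
proof -
  have Int_eq: "L \<inter> tail_space s \<inter> cball 0 \<rho> \<inter> tail_space s = L \<inter> cball 0 \<rho> \<inter> tail_space s" for \<rho>
    by blast
  define t0 where "t0 = real DIM('a) * norm (v j) / r"
  have t0: "t0 > 0" "t0 * r = real DIM('a) * norm (v j)"
    using norm_v_pos[OF j(2)] r unfolding t0_def by auto
  have dim_t0: "Suc j - s \<le> dim (L \<inter> tail_space s \<inter> cball 0 (t0 * r) \<inter> tail_space s)"
    unfolding Int_eq t0(2) using dim_tail_space_cball_ge[OF j] .
  show "succ_min (Suc j - s) (L \<inter> tail_space s) (cball 0 r \<inter> tail_space s) \<le> real DIM('a) * norm (v j) / r"
    using succ_min_cball_le[OF subspace_tail_space t0(1) dim_t0] unfolding t0_def .
  show "norm (v j) / r \<le> succ_min (Suc j - s) (L \<inter> tail_space s) (cball 0 r \<inter> tail_space s)"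
  proof (rule le_succ_min_cball[OF subspace_tail_space t0(1) dim_t0])
    fix t assume "t > 0" "Suc j - s \<le> dim (L \<inter> tail_space s \<inter> cball 0 (t * r) \<inter> tail_space s)"
    then have "norm (v j) \<le> t * r" using norm_v_le_radius[OF j] unfolding Int_eq by blast
    then show "norm (v j) / r \<le> t" using r by (simp add: divide_le_eq)
  qed
qed

lemma decomposition:
  assumes s: "s < DIM('a)" and r: "real DIM('a) * real DIM('a) * coeff_const DIM('a) \<le> r" "r > 0"
  shows "\<exists>(b :: nat \<Rightarrow> 'a) N.
    (\<forall>j<s. b j \<in> L) \<and>
    subspace N \<and> dim N = DIM('a) - s \<and>
    span (b ` {..<s}) \<inter> N = {0} \<and>
    {x + y | x y. x \<in> span (b ` {..<s}) \<and> y \<in> N} = UNIV \<and>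
    lattice_in N (L \<inter> N) \<and>
    proj_along N (b ` {..<s}) ` (L \<inter> cball 0 1) \<subseteq> L \<inter> N \<inter> cball 0 r \<and>
    (\<forall>i\<in>{1..DIM('a) - s}.
       1 / r * succ_min (i + s) L (cball 0 1) \<le> succ_min i (L \<inter> N) (cball 0 r \<inter> N) \<and>
       succ_min i (L \<inter> N) (cball 0 r \<inter> N) \<le> real DIM('a) / r * succ_min (i + s) L (cball 0 1))"
proof (intro exI[of _ basis_vec] exI[of _ "tail_space s"] conjI allI impI ballI)
  show "basis_vec j \<in> L" if "j < s" for j using that s basis_vec_in_lattice by simp
  show "subspace (tail_space s)" "dim (tail_space s) = DIM('a) - s"
    by (simp_all add: subspace_tail_space dim_tail_space)
  show "span (basis_vec ` {..<s}) \<inter> tail_space s = {0}"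
    "{x + y | x y. x \<in> span (basis_vec ` {..<s}) \<and> y \<in> tail_space s} = UNIV"
    "lattice_in (tail_space s) (L \<inter> tail_space s)"
    "proj_along (tail_space s) (basis_vec ` {..<s}) ` (L \<inter> cball 0 1) \<subseteq> L \<inter> tail_space s \<inter> cball 0 r"
    using s r span_head_Int_tail_space span_head_plus_tail_space lattice_in_tail_space
      proj_lattice_cball_subset by simp_all
next
  fix i assume i: "i \<in> {1..DIM('a) - s}"
  define j where "j = i + s - 1"
  have j: "s \<le> j" "j < DIM('a)" "Suc j - s = i" and minimum: "succ_min (i + s) L (cball 0 1) = norm (v j)"
    using i s succ_min_eq_norm_v[of j] unfolding j_def by auto
  show "1 / r * succ_min (i + s) L (cball 0 1) \<le> succ_min i (L \<inter> tail_space s) (cball 0 r \<inter> tail_space s)"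
    "succ_min i (L \<inter> tail_space s) (cball 0 r \<inter> tail_space s) \<le> real DIM('a) / r * succ_min (i + s) L (cball 0 1)"
    using succ_min_tail_space_bounds[OF j(1,2) r(2)] unfolding minimum j(3) by simp_all
qed

end

lemma full_lattice_decomposition:
  fixes L :: "'a::euclidean_space set"
  assumes "full_lattice L" "s < DIM('a)" "real DIM('a) * real DIM('a) * coeff_const DIM('a) \<le> r" "r > 0"
  shows "\<exists>(b :: nat \<Rightarrow> 'a) N.
    (\<forall>j<s. b j \<in> L) \<and>
    subspace N \<and> dim N = DIM('a) - s \<and>
    span (b ` {..<s}) \<inter> N = {0} \<and>
    {x + y | x y. x \<in> span (b ` {..<s}) \<and> y \<in> N} = UNIV \<and>
    lattice_in N (L \<inter> N) \<and>
    proj_along N (b ` {..<s}) ` (L \<inter> cball 0 1) \<subseteq> L \<inter> N \<inter> cball 0 r \<and>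
    (\<forall>i\<in>{1..DIM('a) - s}.
       1 / r * succ_min (i + s) L (cball 0 1) \<le> succ_min i (L \<inter> N) (cball 0 r \<inter> N) \<and>
       succ_min i (L \<inter> N) (cball 0 r \<inter> N) \<le> real DIM('a) / r * succ_min (i + s) L (cball 0 1))"
proof -
  interpret euclidean_lattice L using assms(1) by unfold_locales
  obtain v where "\<forall>k<DIM('a). v k \<in> L \<and> v k \<notin> span (v ` {..<k}) \<and>
      (\<forall>w\<in>L. w \<notin> span (v ` {..<k}) \<longrightarrow> norm (v k) \<le> norm w)"
    using exists_successive_minimal_vectors by blast
  then interpret minimal_vectors L v by unfold_locales auto
  show ?thesis using decomposition[OF assms(2-4)] .
qed

theorem lemma1:
  fixes s :: nat
  assumes "s \<le> DIM('a::euclidean_space) - 1"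
  shows "\<exists>(r::nat) (c1::real) c2. r > 0 \<and> 0 < c1 \<and> c1 \<le> c2 \<and>
    (\<forall>\<Lambda> :: 'a set. full_lattice \<Lambda> \<and> succ_min DIM('a) \<Lambda> (cball 0 1) \<le> 1 \<longrightarrow>
      (\<exists>(b :: nat \<Rightarrow> 'a) N.
         (\<forall>j<s. b j \<in> \<Lambda>) \<and>
         subspace N \<and> dim N = DIM('a) - s \<and>
         span (b ` {..<s}) \<inter> N = {0} \<and>
         {x + y | x y. x \<in> span (b ` {..<s}) \<and> y \<in> N} = UNIV \<and>
         lattice_in N (\<Lambda> \<inter> N) \<and>
         proj_along N (b ` {..<s}) ` (\<Lambda> \<inter> cball 0 1) \<subseteq> \<Lambda> \<inter> N \<inter> cball 0 (real r) \<and>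
         (\<forall>i\<in>{1..DIM('a) - s}.
            c1 * succ_min (i + s) \<Lambda> (cball 0 1) \<le> succ_min i (\<Lambda> \<inter> N) (cball 0 (real r) \<inter> N) \<and>
            succ_min i (\<Lambda> \<inter> N) (cball 0 (real r) \<inter> N) \<le> c2 * succ_min (i + s) \<Lambda> (cball 0 1))))"
proof -
  define r :: nat where "r = nat \<lceil>real DIM('a) * real DIM('a) * coeff_const DIM('a)\<rceil> + 1"
  have r: "real DIM('a) * real DIM('a) * coeff_const DIM('a) \<le> real r" "r > 0"
    unfolding r_def by linarith+
  have s: "s < DIM('a)" using assms DIM_positive[where 'a='a] by linarith
  have "1 / real r \<le> real DIM('a) / real r"
    using r(2) DIM_positive[where 'a='a] by (simp add: divide_right_mono)
  then show ?thesis
    using full_lattice_decomposition[OF _ s r(1)] r(2)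
    by (intro exI[of _ r] exI[of _ "1 / real r"] exI[of _ "real DIM('a) / real r"]) auto
qed

end
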